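(* Let $n \geqslant 2$ and let $p \geqslant 2$ be an integer. For any $\varepsilon_1, \varepsilon_2 \in [0,1]$ with $\varepsilon_1 > \varepsilon_2$, we have $\mathcal X(\varepsilon_1, p) \subset \mathcal X(\varepsilon_2, p)$ (proper inclusion).
   Context: For $\bm x \in \mathbb{R}^n_{\geqslant 0}$ and $p \geqslant 1$, $\|\bm x\|_p = (\sum_{i=1}^n x_i^p)^{1/p}$. Define $D_p = n^{1-1/p} - 1$. For an integer $p\geqslant 2$ and $\varepsilon \in [0,1]$, define $\mathcal X(\varepsilon,p) = \{\bm x \in \mathbb{R}^n_{\geqslant 0} : (1+\varepsilon D_p)\|\bm x\|_p \leqslant \|\bm x\|_1\}$ (the set of "at least $(\varepsilon,p)$-fair" vectors). *)

theory Defs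
  imports "HOL-Analysis.Analysis"
begin

definition pnorm :: "nat \<Rightarrow> real^'n::finite \<Rightarrow> real" where
  "pnorm p x = (\<Sum>i\<in>UNIV. \<bar>x $ i\<bar> ^ p) powr (1 / real p)"

definition Dp :: "'n::finite itself \<Rightarrow> nat \<Rightarrow> real" where
  "Dp _ p = real CARD('n) powr (1 - 1 / real p) - 1"

definition fair_set :: "real \<Rightarrow> nat \<Rightarrow> (real^'n::finite) set" where
  "fair_set \<epsilon> p = {x. (\<forall>i. 0 \<le> x $ i) \<and>
      (1 + \<epsilon> * Dp TYPE('n) p) * pnorm p x \<le> pnorm 1 x}"

end

theory Submission
  imports Defs
begin

text \<open>For nonnegative \<open>x \<noteq> 0\<close> the ratio \<open>\<parallel>x\<parallel>\<^sub>1 / \<parallel>x\<parallel>\<^sub>p\<close> is 1 at a unit vector and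
  \<open>n powr (1 - 1/p) = 1 + D\<^sub>p\<close> at the constant vector, so by the intermediate value theorem
  along the vectors \<open>(1, t, \<dots>, t)\<close>, \<open>0 \<le> t \<le> 1\<close>, it takes the value \<open>1 + \<epsilon>\<^sub>2 D\<^sub>p\<close>.
  Such a vector lies in \<open>\<X>(\<epsilon>\<^sub>2, p)\<close> but, as \<open>D\<^sub>p > 0\<close> for \<open>n, p \<ge> 2\<close>, not in \<open>\<X>(\<epsilon>\<^sub>1, p)\<close>.\<close>

lemma pnorm_nonneg: "0 \<le> pnorm p x"
  by (simp add: pnorm_def)

lemma Dp_nonneg: "0 \<le> Dp TYPE('n::finite) p"
proof -
  have "1 \<le> real CARD('n)"
    by simp
  moreover have "0 \<le> 1 - 1 / real p"
    by (cases "p = 0") (auto simp: field_simps)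
  ultimately show ?thesis
    unfolding Dp_def using ge_one_powr_ge_zero by auto
qed

lemma Dp_pos:
  assumes "2 \<le> CARD('n::finite)" and "1 < p"
  shows "0 < Dp TYPE('n) p"
proof -
  have "1 < real CARD('n)"
    using assms(1) by simp
  moreover have "0 < 1 - 1 / real p"
    using assms(2) by (simp add: field_simps)
  ultimately show ?thesis
    unfolding Dp_def by (simp add: gr_one_powr)
qed

lemma fair_set_antimono:
  assumes "\<epsilon>2 \<le> \<epsilon>1"
  shows "(fair_set \<epsilon>1 p :: (real^'n::finite) set) \<subseteq> fair_set \<epsilon>2 p"
proof
  fix x :: "real^'n"
  assume x: "x \<in> fair_set \<epsilon>1 p"
  have "(1 + \<epsilon>2 * Dp TYPE('n) p) * pnorm p x \<le> (1 + \<epsilon>1 * Dp TYPE('n) p) * pnorm p x"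
    using assms Dp_nonneg pnorm_nonneg by (intro mult_right_mono add_left_mono mult_right_mono) auto
  with x show "x \<in> fair_set \<epsilon>2 p"
    by (auto simp: fair_set_def)
qed

lemma pnorm_spike_vector:
  fixes i0 :: "'n::finite"
  assumes "0 \<le> t" and "0 < q"
  shows "pnorm q (\<chi> i. if i = i0 then 1 else t :: real^'n)
           = (1 + (real CARD('n) - 1) * t ^ q) powr (1 / real q)"
proof -
  have "(\<Sum>i\<in>UNIV. \<bar>(\<chi> i. if i = i0 then 1 else t :: real^'n) $ i\<bar> ^ q)
      = (\<Sum>i\<in>UNIV. if i = i0 then 1 else t ^ q)"
    using assms by (intro sum.cong) auto
  also have "\<dots> = 1 + (\<Sum>i\<in>UNIV - {i0}. t ^ q)"
    by (subst sum.remove[of UNIV i0]) auto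
  also have "\<dots> = 1 + (real CARD('n) - 1) * t ^ q"
    by (simp add: card_Diff_singleton of_nat_diff)
  finally show ?thesis
    by (simp add: pnorm_def)
qed

lemma pnorm_ratio_attains:
  assumes "0 < p" and "1 \<le> c" and "c \<le> 1 + Dp TYPE('n::finite) p"
  obtains x :: "real^'n" where "\<forall>i. 0 \<le> x $ i" and "0 < pnorm p x"
    and "pnorm 1 x = c * pnorm p x"
proof -
  define N where "N = real CARD('n)"
  have N: "1 \<le> N"
    by (simp add: N_def)
  obtain i0 :: 'n where True
    by simp
  define v where "v t = (\<chi> i. if i = i0 then 1 else t :: real^'n)" for t
  define g where "g t = (1 + (N - 1) * t) - c * (1 + (N - 1) * t ^ p) powr (1 / real p)" for t
  have pnorm_p: "pnorm p (v t) = (1 + (N - 1) * t ^ p) powr (1 / real p)" if "0 \<le> t" for t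
    using pnorm_spike_vector[OF that assms(1)] by (simp add: v_def N_def)
  have pnorm_1: "pnorm 1 (v t) = 1 + (N - 1) * t" if "0 \<le> t" for t
    using pnorm_spike_vector[OF that, of 1] N that by (simp add: v_def N_def)
  have base_pos: "0 < 1 + (N - 1) * t ^ p" if "0 \<le> t" for t
    using N that by (simp add: add_pos_nonneg)
  have "g 0 \<le> 0"
    using assms(1,2) by (simp add: g_def power_0_left)
  moreover have "0 \<le> g 1"
  proof -
    have "c * N powr (1 / real p) \<le> N powr (1 - 1 / real p) * N powr (1 / real p)"
      using assms(3) by (intro mult_right_mono) (auto simp: Dp_def N_def)
    also have "\<dots> = N"
      using N by (simp add: powr_add[symmetric])
    finally show ?thesis
      by (simp add: g_def)
  qed
  moreover have "isCont g t" if "0 \<le> t" for t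
    using base_pos[OF that] unfolding g_def by (intro continuous_intros) auto
  ultimately obtain t where t: "0 \<le> t" "t \<le> 1" "g t = 0"
    using IVT[of g 0 0 1] by auto
  show ?thesis
  proof
    show "\<forall>i. 0 \<le> v t $ i"
      using t by (simp add: v_def)
    show "0 < pnorm p (v t)"
      using pnorm_p[OF t(1)] base_pos[OF t(1)] by simp
    show "pnorm 1 (v t) = c * pnorm p (v t)"
      using t pnorm_p pnorm_1 by (simp add: g_def)
  qed
qed

theorem proposition1:
  fixes \<epsilon>1 \<epsilon>2 :: real and p :: nat
  assumes "CARD('n::finite) \<ge> 2"
    and "p \<ge> 2"
    and "0 \<le> \<epsilon>1" and "\<epsilon>1 \<le> 1"
    and "0 \<le> \<epsilon>2" and "\<epsilon>2 \<le> 1"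
    and "\<epsilon>1 > \<epsilon>2"
  shows "(fair_set \<epsilon>1 p :: (real^'n) set) \<subset> fair_set \<epsilon>2 p"
proof -
  define D where "D = Dp TYPE('n) p"
  have D: "0 < D"
    unfolding D_def using assms(1,2) by (intro Dp_pos) auto
  have "1 + \<epsilon>2 * D \<le> 1 + D"
    using D assms(6) by (simp add: mult_left_le_one_le)
  then obtain x :: "real^'n" where x: "\<forall>i. 0 \<le> x $ i" "0 < pnorm p x"
      and ratio: "pnorm 1 x = (1 + \<epsilon>2 * D) * pnorm p x"
    using pnorm_ratio_attains[where 'n = 'n, of p "1 + \<epsilon>2 * D"] D assms(2,5) unfolding D_def by auto
  have "x \<in> fair_set \<epsilon>2 p"
    using x ratio by (simp add: fair_set_def D_def)
  moreover have "(1 + \<epsilon>2 * D) * pnorm p x < (1 + \<epsilon>1 * D) * pnorm p x"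
    using x D assms(7) by (intro mult_strict_right_mono) auto
  then have "x \<notin> fair_set \<epsilon>1 p"
    using ratio by (simp add: fair_set_def D_def)
  ultimately show ?thesis
    using fair_set_antimono[OF less_imp_le[OF assms(7)]] by blast
qed

end
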